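(* Let $(X,d)$ be a complete metric space endowed with a continuous $k$-mean $\mu$ that is weakly $\beta$-contractive. If $X$ is uniformly locally convex (with respect to $\mu$), then the barycentric operator $\beta$ of $\mu$ is power convergent, so that $\mu$ has a $\beta$-extension.
   Context: A $k$-mean is a map $\mu:X^k\to X$ with $\mu(x,\ldots,x)=x$. Barycentric operator: $\beta:X^{k+1}\to X^{k+1}$, $\beta(\mathbf{x})_j=\mu(x_1,\ldots,x_{j-1},x_{j+1},\ldots,x_{k+1})$. $\Delta(\mathbf{x})=\max_{i,j}d(x_i,x_j)$; $\mu$ is weakly $\beta$-contractive if $\Delta(\beta^n(\mathbf{x}))\to0$ for all $\mathbf{x}\in X^{k+1}$. A subset $C$ is convex if $\mu(x_1,\ldots,x_k)\in C$ whenever $x_1,\ldots,x_k\in C$; the convex hull of $A$ is the smallest convex set containing $A$. $X$ is uniformly locally convex if for each $\varepsilon>0$ there is $\delta>0$ such that the convex hull of any set $A$ of diameter less than $\delta$ has diameter less than $\varepsilon$. $\beta$ is power convergent if for each $\mathbf{x}$, $\beta^n(\mathbf{x})\to(x^*,\ldots,x^* )$ for some $x^*$; a $(k+1)$-mean $\nu$ is a $\beta$-extension of $\mu$ if $\beta^n(\mathbf{x})\to(\nu(\mathbf{x}),\ldots,\nu(\mathbf{x}))$ for all $\mathbf{x}$. *)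

theory Defs
  imports "HOL-Analysis.Analysis"
begin

text \<open>Points of X^k are represented as lists of length k. A k-mean is a map
  mu on lists; only its values on lists of length k matter.\<close>

definition is_mean :: "nat \<Rightarrow> ('a list \<Rightarrow> 'a) \<Rightarrow> bool" where
  "is_mean k mu \<longleftrightarrow> (\<forall>x. mu (replicate k x) = x)"

text \<open>Continuity of mu on X^k (product topology), stated sequentially (X is metric).\<close>
definition mean_continuous :: "nat \<Rightarrow> ('a::metric_space list \<Rightarrow> 'a) \<Rightarrow> bool" where
  "mean_continuous k mu \<longleftrightarrow>
     (\<forall>xs S. length xs = k \<and> (\<forall>n. length (S n) = k) \<and>
        (\<forall>i<k. (\<lambda>n. S n ! i) \<longlonglongrightarrow> xs ! i)
        \<longrightarrow> (\<lambda>n. mu (S n)) \<longlonglongrightarrow> mu xs)"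

definition bary :: "('a list \<Rightarrow> 'a) \<Rightarrow> 'a list \<Rightarrow> 'a list" where
  "bary mu xs = map (\<lambda>j. mu (take j xs @ drop (Suc j) xs)) [0..<length xs]"

definition Delta :: "'a::metric_space list \<Rightarrow> real" where
  "Delta xs = Max {dist (xs ! i) (xs ! j) | i j. i < length xs \<and> j < length xs}"

definition weakly_beta_contractive :: "nat \<Rightarrow> ('a::metric_space list \<Rightarrow> 'a) \<Rightarrow> bool" where
  "weakly_beta_contractive k mu \<longleftrightarrow>
     (\<forall>xs. length xs = Suc k \<longrightarrow> (\<lambda>n. Delta ((bary mu ^^ n) xs)) \<longlonglongrightarrow> 0)"

definition mu_convex :: "nat \<Rightarrow> ('a list \<Rightarrow> 'a) \<Rightarrow> 'a set \<Rightarrow> bool" where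
  "mu_convex k mu C \<longleftrightarrow> (\<forall>xs. length xs = k \<and> set xs \<subseteq> C \<longrightarrow> mu xs \<in> C)"

text \<open>Convex hull = (mu_convex k mu) hull A. Diameter is only meaningful for bounded
  sets, so "diameter < d" is rendered as "bounded and diameter < d".\<close>
definition unif_locally_convex :: "nat \<Rightarrow> ('a::metric_space list \<Rightarrow> 'a) \<Rightarrow> bool" where
  "unif_locally_convex k mu \<longleftrightarrow>
     (\<forall>\<epsilon>>0. \<exists>\<delta>>0. \<forall>A. bounded A \<and> diameter A < \<delta> \<longrightarrow>
        bounded (mu_convex k mu hull A) \<and> diameter (mu_convex k mu hull A) < \<epsilon>)"

definition power_convergent :: "nat \<Rightarrow> ('a::metric_space list \<Rightarrow> 'a) \<Rightarrow> bool" where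
  "power_convergent k mu \<longleftrightarrow>
     (\<forall>xs. length xs = Suc k \<longrightarrow>
        (\<exists>x. \<forall>i<Suc k. (\<lambda>n. (bary mu ^^ n) xs ! i) \<longlonglongrightarrow> x))"

definition beta_extension :: "nat \<Rightarrow> ('a::metric_space list \<Rightarrow> 'a) \<Rightarrow> ('a list \<Rightarrow> 'a) \<Rightarrow> bool" where
  "beta_extension k mu nu \<longleftrightarrow> is_mean (Suc k) nu \<and>
     (\<forall>xs. length xs = Suc k \<longrightarrow>
        (\<forall>i<Suc k. (\<lambda>n. (bary mu ^^ n) xs ! i) \<longlonglongrightarrow> nu xs))"

end

theory Submission
  imports Defs
begin

text \<open>Every entry of \<open>\<beta>(y)\<close> is a \<open>\<mu>\<close>-value of entries of \<open>y\<close>, so the \<open>\<mu>\<close>-convex hulls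
  \<open>C\<^sub>n\<close> of the entries of \<open>\<beta>\<^sup>n(x)\<close> form a nested sequence. Weak \<open>\<beta>\<close>-contractivity makes the
  entries of \<open>\<beta>\<^sup>n(x)\<close> arbitrarily close to each other, and uniform local convexity transfers
  this to their hulls, so the diameters of the \<open>C\<^sub>n\<close> tend to zero. By completeness the
  nested sets shrink to a single point, which is the common limit of all entries.
  Constant tuples are fixed by \<open>\<beta>\<close>, so this limit, as a function of \<open>x\<close>, is a
  \<open>(k+1)\<close>-mean.\<close>

lemma dist_nth_le_Delta:
  fixes xs :: "'a::metric_space list"
  assumes "i < length xs" "j < length xs"
  shows "dist (xs ! i) (xs ! j) \<le> Delta xs"
proof -
  have "{dist (xs ! i) (xs ! j) | i j. i < length xs \<and> j < length xs}
        = (\<lambda>(i, j). dist (xs ! i) (xs ! j)) ` ({..<length xs} \<times> {..<length xs})"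
    by auto
  then have "finite {dist (xs ! i) (xs ! j) | i j. i < length xs \<and> j < length xs}"
    by simp
  then show ?thesis
    unfolding Delta_def by (rule Max_ge) (use assms in blast)
qed

lemma diameter_set_le_Delta:
  fixes xs :: "'a::metric_space list"
  assumes "xs \<noteq> []"
  shows "diameter (set xs) \<le> Delta xs"
proof -
  have "dist x y \<le> Delta xs" if "x \<in> set xs" "y \<in> set xs" for x y
    using that dist_nth_le_Delta by (metis in_set_conv_nth)
  with assms show ?thesis
    unfolding diameter_def by (auto intro!: cSUP_least)
qed

lemma length_bary [simp]: "length (bary mu xs) = length xs"
  by (simp add: bary_def)

lemma length_funpow_bary [simp]: "length ((bary mu ^^ n) xs) = length xs"
  by (induction n) auto

lemma nth_bary:
  assumes "i < length xs"
  shows "bary mu xs ! i = mu (take i xs @ drop (Suc i) xs)"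
  using assms by (simp add: bary_def del: upt_Suc)

lemma bary_replicate:
  assumes "is_mean k mu"
  shows "bary mu (replicate (Suc k) x) = replicate (Suc k) x"
proof (rule nth_equalityI)
  fix i assume "i < length (bary mu (replicate (Suc k) x))"
  then have "take i (replicate (Suc k) x) @ drop (Suc i) (replicate (Suc k) x) = replicate k x"
    by (simp add: replicate_add[symmetric] del: replicate_Suc)
  with \<open>i < _\<close> assms show "bary mu (replicate (Suc k) x) ! i = replicate (Suc k) x ! i"
    by (simp add: nth_bary is_mean_def del: replicate_Suc)
qed simp

lemma mu_convex_mu_convex_hull: "mu_convex k mu (mu_convex k mu hull A)"
  by (rule hull_in) (auto simp: mu_convex_def)

lemma set_bary_subset_mu_convex_hull:
  assumes "length ys = Suc k"
  shows "set (bary mu ys) \<subseteq> mu_convex k mu hull set ys"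
proof
  fix z assume "z \<in> set (bary mu ys)"
  then obtain i where i: "i < Suc k" and z: "z = mu (take i ys @ drop (Suc i) ys)"
    using assms by (auto simp: in_set_conv_nth nth_bary)
  have "set (take i ys @ drop (Suc i) ys) \<subseteq> mu_convex k mu hull set ys"
    using hull_subset by (fastforce dest: in_set_takeD in_set_dropD)
  moreover have "length (take i ys @ drop (Suc i) ys) = k"
    using assms i by simp
  ultimately show "z \<in> mu_convex k mu hull set ys"
    using mu_convex_mu_convex_hull z unfolding mu_convex_def by blast
qed

lemma mu_convex_hull_bary_subset:
  assumes "length ys = Suc k"
  shows "mu_convex k mu hull set (bary mu ys) \<subseteq> mu_convex k mu hull set ys"
  using set_bary_subset_mu_convex_hull[OF assms] mu_convex_mu_convex_hull
  by (rule hull_minimal)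

lemma common_limit_of_nested_shrinking_sets:
  fixes C :: "nat \<Rightarrow> 'a::complete_space set" and f :: "'i \<Rightarrow> nat \<Rightarrow> 'a"
  assumes "decseq C"
    and mem: "\<And>i n. i \<in> I \<Longrightarrow> f i n \<in> C n"
    and shrink: "\<And>e. e > 0 \<Longrightarrow> \<exists>N. bounded (C N) \<and> diameter (C N) < e"
  shows "\<exists>L. \<forall>i\<in>I. f i \<longlonglongrightarrow> L"
proof (cases "I = {}")
  case False
  then obtain i0 where "i0 \<in> I" by blast
  have small_closure: "\<exists>N. bounded (C N) \<and> diameter (closure (C N)) < e" if "e > 0" for e
    using shrink[OF that] diameter_closure by metis
  have "closure (C n) \<noteq> {}" for n
    using mem[OF \<open>i0 \<in> I\<close>] closure_subset by blast
  moreover have "closure (C n) \<subseteq> closure (C m)" if "m \<le> n" for m n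
    using \<open>decseq C\<close> that by (simp add: decseq_def closure_mono)
  moreover have "\<exists>N. \<forall>x\<in>closure (C N). \<forall>y\<in>closure (C N). dist x y < e" if "e > 0" for e
    using small_closure[OF that]
    by (meson bounded_closure diameter_bounded_bound le_less_trans)
  ultimately obtain L where L: "\<And>n. L \<in> closure (C n)"
    using decreasing_closed_nest[of "\<lambda>n. closure (C n)"] by blast
  have "f i \<longlonglongrightarrow> L" if "i \<in> I" for i
  proof (rule metric_LIMSEQ_I)
    fix e :: real assume "e > 0"
    then obtain N where N: "bounded (C N)" "diameter (closure (C N)) < e"
      using small_closure by blast
    have "dist (f i n) L < e" if "n \<ge> N" for n
    proof -
      have "f i n \<in> closure (C N)"
        using mem[OF \<open>i \<in> I\<close>] \<open>decseq C\<close> \<open>n \<ge> N\<close> closure_subset by (fastforce simp: decseq_def)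
      then show ?thesis
        using N L diameter_bounded_bound[of "closure (C N)"] bounded_closure
        by (meson le_less_trans)
    qed
    then show "\<exists>N. \<forall>n\<ge>N. dist (f i n) L < e" by blast
  qed
  then show ?thesis by blast
qed simp

lemma power_convergent_if_unif_locally_convex:
  fixes mu :: "'a::complete_space list \<Rightarrow> 'a"
  assumes contractive: "weakly_beta_contractive k mu"
    and locally_convex: "unif_locally_convex k mu"
  shows "power_convergent k mu"
  unfolding power_convergent_def
proof (intro allI impI)
  fix xs :: "'a list" assume len: "length xs = Suc k"
  define C where "C n = mu_convex k mu hull set ((bary mu ^^ n) xs)" for n
  have "decseq C"
    by (intro decseq_SucI) (simp add: C_def mu_convex_hull_bary_subset len)
  moreover have "(bary mu ^^ n) xs ! i \<in> C n" if "i < Suc k" for i n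
    using that len hull_subset unfolding C_def by (fastforce simp: set_conv_nth)
  moreover have "\<exists>N. bounded (C N) \<and> diameter (C N) < e" if "e > 0" for e
  proof -
    obtain d where "d > 0" and d: "\<And>A. bounded A \<and> diameter A < d \<Longrightarrow>
        bounded (mu_convex k mu hull A) \<and> diameter (mu_convex k mu hull A) < e"
      using locally_convex \<open>e > 0\<close> unfolding unif_locally_convex_def by meson
    have "(\<lambda>n. Delta ((bary mu ^^ n) xs)) \<longlonglongrightarrow> 0"
      using contractive len unfolding weakly_beta_contractive_def by blast
    then obtain N where "Delta ((bary mu ^^ N) xs) < d"
      using \<open>d > 0\<close> by (metis LIMSEQ_D diff_zero order.refl real_norm_def abs_less_iff)
    moreover have "diameter (set ((bary mu ^^ N) xs)) \<le> Delta ((bary mu ^^ N) xs)"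
      using len by (intro diameter_set_le_Delta) (simp flip: length_0_conv)
    ultimately show ?thesis
      using d[of "set ((bary mu ^^ N) xs)"] finite_imp_bounded unfolding C_def by force
  qed
  ultimately have "\<exists>L. \<forall>i\<in>{..<Suc k}. (\<lambda>n. (bary mu ^^ n) xs ! i) \<longlonglongrightarrow> L"
    by (intro common_limit_of_nested_shrinking_sets[of C]) auto
  then show "\<exists>L. \<forall>i<Suc k. (\<lambda>n. (bary mu ^^ n) xs ! i) \<longlonglongrightarrow> L"
    by auto
qed

lemma beta_extension_if_power_convergent:
  assumes "is_mean k mu" "power_convergent k mu"
  shows "\<exists>nu. beta_extension k mu nu"
proof -
  define nu where "nu xs = (SOME L. \<forall>i<Suc k. (\<lambda>n. (bary mu ^^ n) xs ! i) \<longlonglongrightarrow> L)" for xs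
  have nu: "\<forall>i<Suc k. (\<lambda>n. (bary mu ^^ n) xs ! i) \<longlonglongrightarrow> nu xs" if "length xs = Suc k" for xs
  proof -
    have "\<exists>L. \<forall>i<Suc k. (\<lambda>n. (bary mu ^^ n) xs ! i) \<longlonglongrightarrow> L"
      using assms(2) that unfolding power_convergent_def by blast
    then show ?thesis
      unfolding nu_def by (rule someI_ex)
  qed
  have "nu (replicate (Suc k) x) = x" for x
  proof -
    have "(bary mu ^^ n) (replicate (Suc k) x) = replicate (Suc k) x" for n
      by (induction n) (simp_all add: bary_replicate[OF assms(1)] del: replicate_Suc)
    then have "(\<lambda>n. x) \<longlonglongrightarrow> nu (replicate (Suc k) x)"
      using nu[of "replicate (Suc k) x"] by (auto simp del: replicate_Suc)
    then show ?thesis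
      using LIMSEQ_unique tendsto_const by blast
  qed
  then have "is_mean (Suc k) nu"
    unfolding is_mean_def by blast
  with nu show ?thesis
    unfolding beta_extension_def by blast
qed

theorem proposition3p9:
  fixes k :: nat and mu :: "'a::complete_space list \<Rightarrow> 'a"
  assumes "is_mean k mu"
    and "mean_continuous k mu"
    and "weakly_beta_contractive k mu"
    and "unif_locally_convex k mu"
  shows "power_convergent k mu \<and> (\<exists>nu. beta_extension k mu nu)"
proof -
  have "power_convergent k mu"
    using assms(3,4) by (rule power_convergent_if_unif_locally_convex)
  with assms(1) show ?thesis
    using beta_extension_if_power_convergent by blast
qed

end
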